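(* Let $(X_i)_{i\in\mathbb{Z}}$ be a stationary standard semicircular sequence with covariance function $\rho$ in a $\ast$-probability space $(\mathcal{A},\phi)$, with $\rho(t)\to0$ as $|t|\to\infty$. Let $U(x)=\sum_{n=1}^{K}c_nU_n(x)$ be a real polynomial (finite Chebyshev expansion, $c_0=0$) with Chebyshev rank $k_\ast$, and let $\rho_U(t)=\phi(U(X_0)U(X_t))$. Then $$\rho_U(t)=\sum_{k=k_\ast}^{K}c_k^2\,\rho(t)^k\quad(t\in\mathbb{Z}),$$ and $$\sum_{n\in\mathbb{Z}}|\rho_U(n)|<\infty\iff\sum_{n\in\mathbb{Z}}|\rho(n)|^{k_\ast}<\infty.$$ *)

theory Defs
  imports "HOL-Analysis.Analysis"
begin

definition star_prob_space ::
  "(complex \<Rightarrow> 'a::ring_1 \<Rightarrow> 'a) \<Rightarrow> ('a \<Rightarrow> 'a) \<Rightarrow> ('a \<Rightarrow> complex) \<Rightarrow> bool" where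
  "star_prob_space sc st \<phi> \<longleftrightarrow>
     (\<forall>x. sc 1 x = x) \<and>
     (\<forall>a b x. sc (a * b) x = sc a (sc b x)) \<and>
     (\<forall>a b x. sc (a + b) x = sc a x + sc b x) \<and>
     (\<forall>a x y. sc a (x + y) = sc a x + sc a y) \<and>
     (\<forall>a x y. sc a (x * y) = sc a x * y) \<and>
     (\<forall>a x y. sc a (x * y) = x * sc a y) \<and>
     (\<forall>x. st (st x) = x) \<and>
     (\<forall>x y. st (x + y) = st x + st y) \<and>
     (\<forall>x y. st (x * y) = st y * st x) \<and>
     (\<forall>a x. st (sc a x) = sc (cnj a) (st x)) \<and>
     (\<forall>x y. \<phi> (x + y) = \<phi> x + \<phi> y) \<and>
     (\<forall>a x. \<phi> (sc a x) = a * \<phi> x) \<and>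
     \<phi> 1 = 1 \<and>
     (\<forall>x. Im (\<phi> (st x * x)) = 0 \<and> Re (\<phi> (st x * x)) \<ge> 0)"

definition nc_pairings :: "nat \<Rightarrow> (nat \<times> nat) set set" where
  "nc_pairings n = {\<pi>. \<pi> \<subseteq> {(r, s). r < s \<and> s < n} \<and>
      (\<forall>i<n. \<exists>!p. p \<in> \<pi> \<and> (fst p = i \<or> snd p = i)) \<and>
      (\<forall>a b c d. (a, b) \<in> \<pi> \<longrightarrow> (c, d) \<in> \<pi> \<longrightarrow> \<not> (a < c \<and> c < b \<and> b < d))}"

text \<open>A stationary standard semicircular sequence with covariance function rho:
  self-adjoint elements whose mixed moments are given by the non-crossing pairing
  (free Wick) formula with covariance phi(X_i X_j) = rho(j - i), rho(0) = 1.\<close>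

definition stationary_std_semicircular ::
  "(complex \<Rightarrow> 'a::ring_1 \<Rightarrow> 'a) \<Rightarrow> ('a \<Rightarrow> 'a) \<Rightarrow> ('a \<Rightarrow> complex) \<Rightarrow> (int \<Rightarrow> 'a)
     \<Rightarrow> (int \<Rightarrow> real) \<Rightarrow> bool" where
  "stationary_std_semicircular sc st \<phi> X \<rho> \<longleftrightarrow>
     (\<forall>i. st (X i) = X i) \<and> \<rho> 0 = 1 \<and>
     (\<forall>is :: int list. \<phi> (prod_list (map X is)) =
        complex_of_real (\<Sum>\<pi>\<in>nc_pairings (length is). \<Prod>(r, s)\<in>\<pi>. \<rho> (is ! s - is ! r)))"

text \<open>Chebyshev polynomials of the second kind adapted to the standard semicircle on [-2,2]:
  U_0 = 1, U_1 = x, U_(n+2) = x U_(n+1) - U_n; evaluated in any ring.\<close>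

fun chebU :: "nat \<Rightarrow> 'a::ring_1 \<Rightarrow> 'a" where
  "chebU 0 x = 1"
| "chebU (Suc 0) x = x"
| "chebU (Suc (Suc n)) x = x * chebU (Suc n) x - chebU n x"

definition cheb_eval :: "(complex \<Rightarrow> 'a::ring_1 \<Rightarrow> 'a) \<Rightarrow> (nat \<Rightarrow> real) \<Rightarrow> nat \<Rightarrow> 'a \<Rightarrow> 'a" where
  "cheb_eval sc c K x = (\<Sum>n=1..K. sc (complex_of_real (c n)) (chebU n x))"

definition cheb_rank :: "(nat \<Rightarrow> real) \<Rightarrow> nat \<Rightarrow> nat \<Rightarrow> bool" where
  "cheb_rank c K k \<longleftrightarrow> 1 \<le> k \<and> k \<le> K \<and> c k \<noteq> 0 \<and> (\<forall>n. 1 \<le> n \<and> n < k \<longrightarrow> c n = 0)"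

end

theory Submission
  imports Defs
begin

text \<open>By the free Wick formula, a moment of the semicircular sequence is a sum over non-crossing
  pairings. Classifying the pairings by the partner of the first point splits each of them into
  two independent non-crossing pairings (inside and outside that block), which gives a recursion
  for the moments. Feeding the Chebyshev recursion \<open>U\<^sub>n\<^sub>+\<^sub>2 = x U\<^sub>n\<^sub>+\<^sub>1 - U\<^sub>n\<close> into it shows that
  \<open>\<phi>(U\<^sub>n(X\<^sub>a) X\<^sub>w\<^sub>1 \<cdots> X\<^sub>w\<^sub>l)\<close> only counts pairings in which no two of the \<open>n\<close> leading copies of
  \<open>X\<^sub>a\<close> are paired with each other, so that \<open>\<phi>(U\<^sub>n(X\<^sub>0) U\<^sub>m(X\<^sub>t)) = \<delta>\<^sub>n\<^sub>m \<rho>(t)\<^sup>n\<close>; expanding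
  \<open>U\<close> gives \<open>\<rho>\<^sub>U\<close>. For the summability, \<open>\<rho>(n) \<rightarrow> 0\<close> makes \<open>\<Sum>\<^sub>j c\<^sub>j\<^sup>2 \<rho>(n)\<^sup>j\<close> comparable to
  \<open>|\<rho>(n)|\<^bsup>k\<^esub>\<close> for all but finitely many \<open>n\<close>.\<close>

section \<open>Non-crossing pairings\<close>

definition blocks_meet :: "nat \<times> nat \<Rightarrow> nat \<times> nat \<Rightarrow> bool" where
  "blocks_meet p q \<longleftrightarrow> fst p = fst q \<or> fst p = snd q \<or> snd p = fst q \<or> snd p = snd q"

lemma nc_pairingsI:
  assumes "\<pi> \<subseteq> {(r, s). r < s \<and> s < n}"
    and "\<And>i. i < n \<Longrightarrow> \<exists>p\<in>\<pi>. fst p = i \<or> snd p = i"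
    and "\<And>p q. p \<in> \<pi> \<Longrightarrow> q \<in> \<pi> \<Longrightarrow> blocks_meet p q \<Longrightarrow> p = q"
    and "\<And>a b c d. (a, b) \<in> \<pi> \<Longrightarrow> (c, d) \<in> \<pi> \<Longrightarrow> \<not> (a < c \<and> c < b \<and> b < d)"
  shows "\<pi> \<in> nc_pairings n"
  unfolding nc_pairings_def
proof (intro CollectI conjI allI impI)
  fix i assume "i < n"
  then obtain p where p: "p \<in> \<pi>" "fst p = i \<or> snd p = i" using assms(2) by blast
  show "\<exists>!p. p \<in> \<pi> \<and> (fst p = i \<or> snd p = i)"
  proof (rule ex1I[of _ p])
    fix q assume "q \<in> \<pi> \<and> (fst q = i \<or> snd q = i)"
    then show "q = p" using assms(3)[of q p] p unfolding blocks_meet_def by auto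
  qed (use p in auto)
qed (use assms in auto)

lemma nc_pairings_block: "\<pi> \<in> nc_pairings n \<Longrightarrow> (a, b) \<in> \<pi> \<Longrightarrow> a < b \<and> b < n"
  unfolding nc_pairings_def by auto

lemma nc_pairings_cover: "\<pi> \<in> nc_pairings n \<Longrightarrow> i < n \<Longrightarrow> \<exists>p\<in>\<pi>. fst p = i \<or> snd p = i"
  unfolding nc_pairings_def by blast

lemma nc_pairings_noncrossing:
  "\<pi> \<in> nc_pairings n \<Longrightarrow> (a, b) \<in> \<pi> \<Longrightarrow> (c, d) \<in> \<pi> \<Longrightarrow> \<not> (a < c \<and> c < b \<and> b < d)"
  unfolding nc_pairings_def by blast

lemma nc_pairings_unique:
  assumes "\<pi> \<in> nc_pairings n" "p \<in> \<pi>" "q \<in> \<pi>" "blocks_meet p q"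
  shows "p = q"
proof -
  have unique: "\<And>i. i < n \<Longrightarrow> \<exists>!p. p \<in> \<pi> \<and> (fst p = i \<or> snd p = i)"
    using assms(1) unfolding nc_pairings_def by blast
  have "fst p < n" "snd p < n" "fst q < n" "snd q < n"
    using nc_pairings_block[OF assms(1), of "fst p" "snd p"] nc_pairings_block[OF assms(1), of "fst q" "snd q"]
      assms(2,3) by auto
  then obtain i where "i < n" "fst p = i \<or> snd p = i" "fst q = i \<or> snd q = i"
    using assms(4) unfolding blocks_meet_def by blast
  then show ?thesis using unique assms(2,3) by blast
qed

lemma finite_nc_pairings: "finite (nc_pairings n)"
proof (rule finite_subset)
  show "nc_pairings n \<subseteq> Pow ({..<n} \<times> {..<n})" unfolding nc_pairings_def by auto
qed simp

lemma finite_nc_pairing: "\<pi> \<in> nc_pairings n \<Longrightarrow> finite \<pi>"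
  by (rule finite_subset[of _ "{..<n} \<times> {..<n}"]) (auto dest: nc_pairings_block)

lemma nc_pairings_0: "nc_pairings 0 = {{}}"
  unfolding nc_pairings_def by auto

definition shift_pairs :: "nat \<Rightarrow> (nat \<times> nat) set \<Rightarrow> (nat \<times> nat) set" where
  "shift_pairs k \<pi> = (\<lambda>(a, b). (a + k, b + k)) ` \<pi>"

lemma mem_shift_pairs_iff: "(x, y) \<in> shift_pairs k \<pi> \<longleftrightarrow> k \<le> x \<and> k \<le> y \<and> (x - k, y - k) \<in> \<pi>"
proof
  assume "(x, y) \<in> shift_pairs k \<pi>"
  then show "k \<le> x \<and> k \<le> y \<and> (x - k, y - k) \<in> \<pi>" unfolding shift_pairs_def by auto
next
  assume "k \<le> x \<and> k \<le> y \<and> (x - k, y - k) \<in> \<pi>"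
  then show "(x, y) \<in> shift_pairs k \<pi>"
    unfolding shift_pairs_def by (auto intro: image_eqI[of _ _ "(x - k, y - k)"])
qed

lemma mem_shift_pairs_add_iff [simp]: "(x + k, y + k) \<in> shift_pairs k \<pi> \<longleftrightarrow> (x, y) \<in> \<pi>"
  by (simp add: mem_shift_pairs_iff)

lemma shift_pairs_block:
  "\<pi> \<in> nc_pairings n \<Longrightarrow> (a, b) \<in> shift_pairs k \<pi> \<Longrightarrow> k \<le> a \<and> a < b \<and> b < k + n"
  unfolding mem_shift_pairs_iff using nc_pairings_block[of \<pi> n "a - k" "b - k"] by auto

lemma shift_pairs_unique:
  "\<pi> \<in> nc_pairings n \<Longrightarrow> p \<in> shift_pairs k \<pi> \<Longrightarrow> q \<in> shift_pairs k \<pi> \<Longrightarrow> blocks_meet p q \<Longrightarrow> p = q"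
proof -
  assume \<pi>: "\<pi> \<in> nc_pairings n" and "p \<in> shift_pairs k \<pi>" "q \<in> shift_pairs k \<pi>" "blocks_meet p q"
  then obtain a b c d where "p = (a + k, b + k)" "q = (c + k, d + k)" "(a, b) \<in> \<pi>" "(c, d) \<in> \<pi>"
    "blocks_meet (a, b) (c, d)"
    unfolding shift_pairs_def blocks_meet_def by auto
  then show "p = q" using nc_pairings_unique[OF \<pi>] by blast
qed

lemma shift_pairs_noncrossing:
  "\<pi> \<in> nc_pairings n \<Longrightarrow> (a, b) \<in> shift_pairs k \<pi> \<Longrightarrow> (c, d) \<in> shift_pairs k \<pi> \<Longrightarrow> \<not> (a < c \<and> c < b \<and> b < d)"
  unfolding mem_shift_pairs_iff using nc_pairings_noncrossing[of \<pi> n "a - k" "b - k" "c - k" "d - k"]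
  by auto

definition nc_glue :: "nat \<Rightarrow> (nat \<times> nat) set \<times> (nat \<times> nat) set \<Rightarrow> (nat \<times> nat) set" where
  "nc_glue s pp = insert (0, Suc s) (shift_pairs 1 (fst pp) \<union> shift_pairs (s + 2) (snd pp))"

lemma mem_nc_glue_iff:
  "(x, y) \<in> nc_glue s pp \<longleftrightarrow>
     (x, y) = (0, Suc s) \<or> (x, y) \<in> shift_pairs 1 (fst pp) \<or> (x, y) \<in> shift_pairs (s + 2) (snd pp)"
  unfolding nc_glue_def by auto

lemma nc_glue_first_block: "(0, Suc s) \<in> nc_glue s pp"
  by (simp add: nc_glue_def)

lemma nc_glue_in_nc_pairings:
  assumes \<pi>1: "\<pi>1 \<in> nc_pairings s" and \<pi>2: "\<pi>2 \<in> nc_pairings m"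
  shows "nc_glue s (\<pi>1, \<pi>2) \<in> nc_pairings (s + m + 2)"
proof -
  have block: "(x, y) = (0, Suc s)
      \<or> ((x, y) \<in> shift_pairs 1 \<pi>1 \<and> 1 \<le> x \<and> x < y \<and> y < Suc s)
      \<or> ((x, y) \<in> shift_pairs (s + 2) \<pi>2 \<and> s + 2 \<le> x \<and> x < y \<and> y < s + m + 2)"
    if "(x, y) \<in> nc_glue s (\<pi>1, \<pi>2)" for x y
    using that shift_pairs_block[OF \<pi>1, of x y 1] shift_pairs_block[OF \<pi>2, of x y "s + 2"]
    unfolding mem_nc_glue_iff by auto
  show ?thesis
  proof (rule nc_pairingsI)
    show "nc_glue s (\<pi>1, \<pi>2) \<subseteq> {(r, t). r < t \<and> t < s + m + 2}"
      using block by fastforce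
  next
    fix i assume i: "i < s + m + 2"
    consider "i = 0 \<or> i = Suc s" | "0 < i" "i \<le> s" | "s + 2 \<le> i" by linarith
    then show "\<exists>p\<in>nc_glue s (\<pi>1, \<pi>2). fst p = i \<or> snd p = i"
    proof cases
      case 1
      then show ?thesis unfolding nc_glue_def by auto
    next
      case 2
      then have "i - 1 < s" by simp
      then obtain p where "p \<in> \<pi>1" "fst p = i - 1 \<or> snd p = i - 1"
        using nc_pairings_cover[OF \<pi>1] by blast
      then show ?thesis
        using 2 by (intro bexI[of _ "(fst p + 1, snd p + 1)"]) (auto simp: mem_nc_glue_iff mem_shift_pairs_iff)
    next
      case 3
      then have "i - (s + 2) < m" using i by simp
      then obtain p where "p \<in> \<pi>2" "fst p = i - (s + 2) \<or> snd p = i - (s + 2)"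
        using nc_pairings_cover[OF \<pi>2] by blast
      then show ?thesis
        using 3 by (intro bexI[of _ "(fst p + (s + 2), snd p + (s + 2))"])
          (auto simp: mem_nc_glue_iff mem_shift_pairs_iff)
    qed
  next
    fix p q assume p: "p \<in> nc_glue s (\<pi>1, \<pi>2)" and q: "q \<in> nc_glue s (\<pi>1, \<pi>2)" and "blocks_meet p q"
    obtain x y z w where xy: "p = (x, y)" and zw: "q = (z, w)" by fastforce
    show "p = q"
      using p q block[of x y] block[of z w] \<open>blocks_meet p q\<close>
        shift_pairs_unique[OF \<pi>1, of p 1 q] shift_pairs_unique[OF \<pi>2, of p "s + 2" q]
      unfolding xy zw blocks_meet_def by auto
  next
    fix a b c d assume "(a, b) \<in> nc_glue s (\<pi>1, \<pi>2)" "(c, d) \<in> nc_glue s (\<pi>1, \<pi>2)"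
    then show "\<not> (a < c \<and> c < b \<and> b < d)"
      using block[of a b] block[of c d] shift_pairs_noncrossing[OF \<pi>1, of a b 1 c d]
        shift_pairs_noncrossing[OF \<pi>2, of a b "s + 2" c d] by auto
  qed
qed

definition nc_window :: "nat \<Rightarrow> nat \<Rightarrow> (nat \<times> nat) set \<Rightarrow> (nat \<times> nat) set" where
  "nc_window l m \<pi> = {(a, b). (a + l, b + l) \<in> \<pi> \<and> b < m}"

lemma nc_window_in_nc_pairings:
  assumes \<pi>: "\<pi> \<in> nc_pairings n" and "l + m \<le> n"
    and closed: "\<And>c d. (c, d) \<in> \<pi> \<Longrightarrow> c \<in> {l..<l + m} \<or> d \<in> {l..<l + m} \<Longrightarrow>
                   c \<in> {l..<l + m} \<and> d \<in> {l..<l + m}"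
  shows "nc_window l m \<pi> \<in> nc_pairings m"
proof (rule nc_pairingsI)
  show "nc_window l m \<pi> \<subseteq> {(r, s). r < s \<and> s < m}"
    unfolding nc_window_def using nc_pairings_block[OF \<pi>] by fastforce
next
  fix i assume "i < m"
  then obtain p where p: "p \<in> \<pi>" "fst p = i + l \<or> snd p = i + l"
    using nc_pairings_cover[OF \<pi>, of "i + l"] assms(2) by auto
  then have "fst p \<in> {l..<l + m} \<and> snd p \<in> {l..<l + m}"
    using closed[of "fst p" "snd p"] \<open>i < m\<close> by auto
  then show "\<exists>p\<in>nc_window l m \<pi>. fst p = i \<or> snd p = i"
    using p by (intro bexI[of _ "(fst p - l, snd p - l)"]) (auto simp: nc_window_def)
next
  fix p q assume "p \<in> nc_window l m \<pi>" "q \<in> nc_window l m \<pi>" "blocks_meet p q"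
  then show "p = q"
    using nc_pairings_unique[OF \<pi>, of "(fst p + l, snd p + l)" "(fst q + l, snd q + l)"]
    unfolding nc_window_def blocks_meet_def by auto
next
  fix a b c d assume "(a, b) \<in> nc_window l m \<pi>" "(c, d) \<in> nc_window l m \<pi>"
  then show "\<not> (a < c \<and> c < b \<and> b < d)"
    using nc_pairings_noncrossing[OF \<pi>, of "a + l" "b + l" "c + l" "d + l"]
    unfolding nc_window_def by auto
qed

lemma nc_pairing_first_block_cases:
  assumes \<pi>: "\<pi> \<in> nc_pairings (s + m + 2)" and first: "(0, Suc s) \<in> \<pi>" and cd: "(c, d) \<in> \<pi>"
  shows "(c, d) = (0, Suc s) \<or> (1 \<le> c \<and> d \<le> s) \<or> s + 2 \<le> c"
proof (cases "c = 0 \<or> c = Suc s \<or> d = Suc s")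
  case True
  then have "blocks_meet (0, Suc s) (c, d)" unfolding blocks_meet_def by auto
  then show ?thesis using nc_pairings_unique[OF \<pi> first cd] by simp
next
  case False
  then show ?thesis
    using nc_pairings_block[OF \<pi> cd] nc_pairings_noncrossing[OF \<pi> first cd] by linarith
qed

lemma mem_shift_pairs_nc_window_iff:
  "(x, y) \<in> shift_pairs k (nc_window k m \<pi>) \<longleftrightarrow> (x, y) \<in> \<pi> \<and> k \<le> x \<and> k \<le> y \<and> y < k + m"
  unfolding mem_shift_pairs_iff nc_window_def by auto

lemma nc_windows_in_nc_pairings:
  assumes \<pi>: "\<pi> \<in> nc_pairings (s + m + 2)" and first: "(0, Suc s) \<in> \<pi>"
  shows "nc_window 1 s \<pi> \<in> nc_pairings s" "nc_window (s + 2) m \<pi> \<in> nc_pairings m"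
proof -
  note cases = nc_pairing_first_block_cases[OF \<pi> first] and block = nc_pairings_block[OF \<pi>]
  have "c \<in> {1..<1 + s} \<and> d \<in> {1..<1 + s}"
    if "(c, d) \<in> \<pi>" "c \<in> {1..<1 + s} \<or> d \<in> {1..<1 + s}" for c d
    using that cases[OF that(1)] block[OF that(1)] by auto
  then show "nc_window 1 s \<pi> \<in> nc_pairings s"
    by (intro nc_window_in_nc_pairings[OF \<pi>]) auto
  have "c \<in> {s + 2..<s + 2 + m} \<and> d \<in> {s + 2..<s + 2 + m}"
    if "(c, d) \<in> \<pi>" "c \<in> {s + 2..<s + 2 + m} \<or> d \<in> {s + 2..<s + 2 + m}" for c d
    using that cases[OF that(1)] block[OF that(1)] by auto
  then show "nc_window (s + 2) m \<pi> \<in> nc_pairings m"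
    by (intro nc_window_in_nc_pairings[OF \<pi>]) auto
qed

lemma nc_glue_windows:
  assumes \<pi>: "\<pi> \<in> nc_pairings (s + m + 2)" and first: "(0, Suc s) \<in> \<pi>"
  shows "nc_glue s (nc_window 1 s \<pi>, nc_window (s + 2) m \<pi>) = \<pi>"
proof (rule set_eqI; clarify)
  fix x y
  show "(x, y) \<in> nc_glue s (nc_window 1 s \<pi>, nc_window (s + 2) m \<pi>) \<longleftrightarrow> (x, y) \<in> \<pi>"
    using first nc_pairing_first_block_cases[OF \<pi> first, of x y] nc_pairings_block[OF \<pi>, of x y]
    unfolding mem_nc_glue_iff fst_conv snd_conv mem_shift_pairs_nc_window_iff by auto
qed

lemma nc_window_glue_fst:
  assumes \<pi>1: "\<pi>1 \<in> nc_pairings s"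
  shows "nc_window 1 s (nc_glue s (\<pi>1, \<pi>2)) = \<pi>1"
proof (rule set_eqI; clarify)
  fix x y
  show "(x, y) \<in> nc_window 1 s (nc_glue s (\<pi>1, \<pi>2)) \<longleftrightarrow> (x, y) \<in> \<pi>1"
    using nc_pairings_block[OF \<pi>1, of x y] mem_shift_pairs_iff[of "x + 1" "y + 1" "s + 2" \<pi>2]
    unfolding nc_window_def mem_nc_glue_iff fst_conv snd_conv mem_shift_pairs_add_iff by auto
qed

lemma nc_window_glue_snd:
  assumes \<pi>1: "\<pi>1 \<in> nc_pairings s" and \<pi>2: "\<pi>2 \<in> nc_pairings m"
  shows "nc_window (s + 2) m (nc_glue s (\<pi>1, \<pi>2)) = \<pi>2"
proof (rule set_eqI; clarify)
  fix x y
  have "(x + (s + 2), y + (s + 2)) \<notin> shift_pairs 1 \<pi>1"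
    using shift_pairs_block[OF \<pi>1, of "x + (s + 2)" "y + (s + 2)" 1] by auto
  then show "(x, y) \<in> nc_window (s + 2) m (nc_glue s (\<pi>1, \<pi>2)) \<longleftrightarrow> (x, y) \<in> \<pi>2"
    using nc_pairings_block[OF \<pi>2, of x y]
    unfolding nc_window_def mem_nc_glue_iff fst_conv snd_conv mem_shift_pairs_add_iff by auto
qed

lemma bij_betw_nc_glue:
  "bij_betw (nc_glue s) (nc_pairings s \<times> nc_pairings m) {\<pi> \<in> nc_pairings (s + m + 2). (0, Suc s) \<in> \<pi>}"
proof (rule bij_betw_byWitness[where f' = "\<lambda>\<pi>. (nc_window 1 s \<pi>, nc_window (s + 2) m \<pi>)"])
  show "\<forall>p\<in>nc_pairings s \<times> nc_pairings m.
          (nc_window 1 s (nc_glue s p), nc_window (s + 2) m (nc_glue s p)) = p"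
  proof
    fix p assume "p \<in> nc_pairings s \<times> nc_pairings m"
    then obtain \<pi>1 \<pi>2 where p: "p = (\<pi>1, \<pi>2)" "\<pi>1 \<in> nc_pairings s" "\<pi>2 \<in> nc_pairings m" by blast
    show "(nc_window 1 s (nc_glue s p), nc_window (s + 2) m (nc_glue s p)) = p"
      unfolding p(1) nc_window_glue_fst[OF p(2)] nc_window_glue_snd[OF p(2,3)] ..
  qed
  show "\<forall>\<pi>\<in>{\<pi> \<in> nc_pairings (s + m + 2). (0, Suc s) \<in> \<pi>}.
          nc_glue s (nc_window 1 s \<pi>, nc_window (s + 2) m \<pi>) = \<pi>"
    by (intro ballI nc_glue_windows) simp_all
  show "nc_glue s ` (nc_pairings s \<times> nc_pairings m) \<subseteq> {\<pi> \<in> nc_pairings (s + m + 2). (0, Suc s) \<in> \<pi>}"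
    by (auto intro!: nc_glue_in_nc_pairings simp only: nc_glue_first_block)
  show "(\<lambda>\<pi>. (nc_window 1 s \<pi>, nc_window (s + 2) m \<pi>)) ` {\<pi> \<in> nc_pairings (s + m + 2). (0, Suc s) \<in> \<pi>}
          \<subseteq> nc_pairings s \<times> nc_pairings m"
  proof (rule image_subsetI)
    fix \<pi> assume "\<pi> \<in> {\<pi> \<in> nc_pairings (s + m + 2). (0, Suc s) \<in> \<pi>}"
    then have "\<pi> \<in> nc_pairings (s + m + 2)" "(0, Suc s) \<in> \<pi>" by simp_all
    then show "(nc_window 1 s \<pi>, nc_window (s + 2) m \<pi>) \<in> nc_pairings s \<times> nc_pairings m"
      using nc_windows_in_nc_pairings by blast
  qed
qed

section \<open>Free Wick moments\<close>

definition pairing_weight :: "(int \<Rightarrow> real) \<Rightarrow> int list \<Rightarrow> (nat \<times> nat) set \<Rightarrow> real" where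
  "pairing_weight \<rho> w \<pi> = (\<Prod>(r, s)\<in>\<pi>. \<rho> (w ! s - w ! r))"

definition nc_moment :: "(int \<Rightarrow> real) \<Rightarrow> int list \<Rightarrow> real" where
  "nc_moment \<rho> w = (\<Sum>\<pi>\<in>nc_pairings (length w). pairing_weight \<rho> w \<pi>)"

lemma nc_moment_Nil [simp]: "nc_moment \<rho> [] = 1"
  unfolding nc_moment_def pairing_weight_def by (simp add: nc_pairings_0)

lemma prod_shift_pairs_eq_pairing_weight:
  assumes \<pi>: "\<pi> \<in> nc_pairings m" and len: "k + m \<le> length v"
  shows "(\<Prod>(r, s)\<in>shift_pairs k \<pi>. \<rho> (v ! s - v ! r)) = pairing_weight \<rho> (take m (drop k v)) \<pi>"
proof -
  have "(\<Prod>(r, s)\<in>shift_pairs k \<pi>. \<rho> (v ! s - v ! r)) = (\<Prod>(a, b)\<in>\<pi>. \<rho> (v ! (b + k) - v ! (a + k)))"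
    unfolding shift_pairs_def by (subst prod.reindex) (auto simp: inj_on_def intro!: prod.cong)
  also have "\<dots> = pairing_weight \<rho> (take m (drop k v)) \<pi>"
    unfolding pairing_weight_def
  proof (rule prod.cong; clarify)
    fix a b assume "(a, b) \<in> \<pi>"
    then have "a < m" "b < m" using nc_pairings_block[OF \<pi>, of a b] by auto
    then show "\<rho> (v ! (b + k) - v ! (a + k)) = \<rho> (take m (drop k v) ! b - take m (drop k v) ! a)"
      using len by (simp add: nth_drop add.commute)
  qed
  finally show ?thesis .
qed

lemma pairing_weight_nc_glue:
  assumes \<pi>1: "\<pi>1 \<in> nc_pairings s" and \<pi>2: "\<pi>2 \<in> nc_pairings m" and len: "length w = s + m + 1"
  shows "pairing_weight \<rho> (x # w) (nc_glue s (\<pi>1, \<pi>2)) =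
           \<rho> (w ! s - x) * pairing_weight \<rho> (take s w) \<pi>1 * pairing_weight \<rho> (drop (Suc s) w) \<pi>2"
proof -
  let ?g = "\<lambda>(r, t). \<rho> ((x # w) ! t - (x # w) ! r)"
  have fin: "finite (shift_pairs 1 \<pi>1)" "finite (shift_pairs (s + 2) \<pi>2)"
    using finite_nc_pairing[OF \<pi>1] finite_nc_pairing[OF \<pi>2] unfolding shift_pairs_def by simp_all
  have disj: "(0, Suc s) \<notin> shift_pairs 1 \<pi>1 \<union> shift_pairs (s + 2) \<pi>2"
    "shift_pairs 1 \<pi>1 \<inter> shift_pairs (s + 2) \<pi>2 = {}"
    using shift_pairs_block[OF \<pi>1, of _ _ 1] shift_pairs_block[OF \<pi>2, of _ _ "s + 2"] by fastforce+
  have "pairing_weight \<rho> (x # w) (nc_glue s (\<pi>1, \<pi>2))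
      = ?g (0, Suc s) * (prod ?g (shift_pairs 1 \<pi>1) * prod ?g (shift_pairs (s + 2) \<pi>2))"
    unfolding pairing_weight_def nc_glue_def fst_conv snd_conv
    using fin disj by (simp add: prod.union_disjoint)
  also have "prod ?g (shift_pairs 1 \<pi>1) = pairing_weight \<rho> (take s w) \<pi>1"
    using prod_shift_pairs_eq_pairing_weight[OF \<pi>1, of 1 "x # w"] len by simp
  also have "take m (drop (s + 2) (x # w)) = drop (Suc s) w"
    using len by (simp add: drop_Cons')
  then have "prod ?g (shift_pairs (s + 2) \<pi>2) = pairing_weight \<rho> (drop (Suc s) w) \<pi>2"
    using prod_shift_pairs_eq_pairing_weight[OF \<pi>2, of "s + 2" "x # w"] len by simp
  finally show ?thesis by (simp add: mult.assoc)
qed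

lemma nc_moment_first_block:
  assumes "s < length w"
  shows "(\<Sum>\<pi>\<in>{\<pi> \<in> nc_pairings (Suc (length w)). (0, Suc s) \<in> \<pi>}. pairing_weight \<rho> (x # w) \<pi>)
       = \<rho> (w ! s - x) * nc_moment \<rho> (take s w) * nc_moment \<rho> (drop (Suc s) w)"
proof -
  define m where "m = length w - Suc s"
  have len: "length w = s + m + 1" "Suc (length w) = s + m + 2" using assms unfolding m_def by auto
  have "(\<Sum>\<pi>\<in>{\<pi> \<in> nc_pairings (Suc (length w)). (0, Suc s) \<in> \<pi>}. pairing_weight \<rho> (x # w) \<pi>)
      = (\<Sum>p\<in>nc_pairings s \<times> nc_pairings m. pairing_weight \<rho> (x # w) (nc_glue s p))"
    unfolding len(2) by (rule sum.reindex_bij_betw[OF bij_betw_nc_glue, symmetric])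
  also have "\<dots> = (\<Sum>(\<pi>1, \<pi>2)\<in>nc_pairings s \<times> nc_pairings m.
      \<rho> (w ! s - x) * (pairing_weight \<rho> (take s w) \<pi>1 * pairing_weight \<rho> (drop (Suc s) w) \<pi>2))"
    by (rule sum.cong) (auto simp: pairing_weight_nc_glue len(1) mult.assoc)
  also have "\<dots> = \<rho> (w ! s - x) * (\<Sum>(\<pi>1, \<pi>2)\<in>nc_pairings s \<times> nc_pairings m.
      pairing_weight \<rho> (take s w) \<pi>1 * pairing_weight \<rho> (drop (Suc s) w) \<pi>2)"
    by (simp add: sum_distrib_left case_prod_beta)
  also have "(\<Sum>(\<pi>1, \<pi>2)\<in>nc_pairings s \<times> nc_pairings m.
      pairing_weight \<rho> (take s w) \<pi>1 * pairing_weight \<rho> (drop (Suc s) w) \<pi>2) =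
      (\<Sum>\<pi>1\<in>nc_pairings s. pairing_weight \<rho> (take s w) \<pi>1) *
      (\<Sum>\<pi>2\<in>nc_pairings m. pairing_weight \<rho> (drop (Suc s) w) \<pi>2)"
    by (simp add: sum_product sum.cartesian_product)
  finally show ?thesis
    using len(1) by (simp add: nc_moment_def mult.assoc min_def)
qed

lemma nc_moment_Cons:
  "nc_moment \<rho> (x # w) = (\<Sum>s<length w. \<rho> (w ! s - x) * nc_moment \<rho> (take s w) * nc_moment \<rho> (drop (Suc s) w))"
proof -
  define B where "B s = {\<pi> \<in> nc_pairings (Suc (length w)). (0, Suc s) \<in> \<pi>}" for s
  have partner: "\<exists>s<length w. (0, Suc s) \<in> \<pi>" if \<pi>: "\<pi> \<in> nc_pairings (Suc (length w))" for \<pi>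
  proof -
    obtain p where p: "p \<in> \<pi>" "fst p = 0 \<or> snd p = 0" using nc_pairings_cover[OF \<pi>, of 0] by auto
    then have "fst p = 0" "0 < snd p" "snd p < Suc (length w)"
      using nc_pairings_block[OF \<pi>, of "fst p" "snd p"] by auto
    then show ?thesis using p(1) by (intro exI[of _ "snd p - 1"]) (cases p, auto)
  qed
  have "nc_pairings (Suc (length w)) = (\<Union>s<length w. B s)"
    unfolding B_def using partner by blast
  moreover have "B i \<inter> B j = {}" if "i \<noteq> j" for i j
  proof -
    have "\<pi> \<in> nc_pairings n \<Longrightarrow> (0, Suc i) \<in> \<pi> \<Longrightarrow> (0, Suc j) \<in> \<pi> \<Longrightarrow> False" for \<pi> n
      using nc_pairings_unique[of \<pi> n "(0, Suc i)" "(0, Suc j)"] that by (simp add: blocks_meet_def)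
    then show ?thesis unfolding B_def by blast
  qed
  moreover have "finite (B s)" for s
    unfolding B_def using finite_nc_pairings by simp
  ultimately have "nc_moment \<rho> (x # w) = (\<Sum>s<length w. \<Sum>\<pi>\<in>B s. pairing_weight \<rho> (x # w) \<pi>)"
    unfolding nc_moment_def by (simp add: sum.UNION_disjoint)
  then show ?thesis
    unfolding B_def by (simp add: nc_moment_first_block)
qed

section \<open>Chebyshev polynomials\<close>

lemma sum_triangle_reindex:
  fixes G :: "nat \<Rightarrow> nat \<Rightarrow> 'a::comm_monoid_add"
  shows "(\<Sum>s<L. \<Sum>q<s. G q s) = (\<Sum>q<L. \<Sum>p<L - Suc q. G q (Suc q + p))"
proof (induction L)
  case (Suc L)
  have "(\<Sum>q<Suc L. \<Sum>p<Suc L - Suc q. G q (Suc q + p))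
      = (\<Sum>q<L. (\<Sum>p<L - Suc q. G q (Suc q + p)) + G q L)"
  proof (subst sum.lessThan_Suc, simp, rule sum.cong)
    fix q assume "q \<in> {..<L}"
    then have "Suc L - Suc q = Suc (L - Suc q)" "Suc (q + (L - Suc q)) = L" by auto
    then show "(\<Sum>p<L - q. G q (Suc (q + p))) = (\<Sum>p<L - Suc q. G q (Suc (q + p))) + G q L"
      by simp
  qed simp
  then show ?case using Suc by (simp add: sum.distrib)
qed simp

text \<open>\<open>cheb_moment \<rho> n a w\<close> sums the Wick weights of the pairings of the word \<open>a\<^sup>n w\<close> in which each of
  the leading \<open>a\<close>'s is paired with a letter of \<open>w\<close>; it will be \<open>\<phi>(U\<^sub>n(X\<^sub>a) X\<^sub>w\<^sub>1 \<cdots> X\<^sub>w\<^sub>l)\<close>.\<close>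

fun cheb_moment :: "(int \<Rightarrow> real) \<Rightarrow> nat \<Rightarrow> int \<Rightarrow> int list \<Rightarrow> real" where
  "cheb_moment \<rho> 0 a w = nc_moment \<rho> w"
| "cheb_moment \<rho> (Suc n) a w =
     (\<Sum>s<length w. \<rho> (w ! s - a) * nc_moment \<rho> (take s w) * cheb_moment \<rho> n a (drop (Suc s) w))"

lemma cheb_moment_Suc_0: "cheb_moment \<rho> (Suc 0) a w = nc_moment \<rho> (a # w)"
  by (simp add: nc_moment_Cons)

text \<open>The counterpart of \<open>x U\<^sub>n\<^sub>+\<^sub>1 = U\<^sub>n\<^sub>+\<^sub>2 + U\<^sub>n\<close>: the innermost leading \<open>a\<close> is paired either with
  the new letter \<open>a\<close> in front of \<open>w\<close> or with a letter of \<open>w\<close>.\<close>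

lemma cheb_moment_Cons_same:
  assumes \<rho>0: "\<rho> 0 = 1"
  shows "cheb_moment \<rho> (Suc n) a (a # w) = cheb_moment \<rho> (Suc (Suc n)) a w + cheb_moment \<rho> n a w"
proof -
  let ?L = "length w"
  define G where "G q s = \<rho> (w ! s - a) * (\<rho> (w ! q - a) * nc_moment \<rho> (take q w) *
      nc_moment \<rho> (drop (Suc q) (take s w))) * cheb_moment \<rho> n a (drop (Suc s) w)" for q s
  have "cheb_moment \<rho> (Suc n) a (a # w) = cheb_moment \<rho> n a w +
      (\<Sum>s<?L. \<rho> (w ! s - a) * nc_moment \<rho> (a # take s w) * cheb_moment \<rho> n a (drop (Suc s) w))"
    by (simp only: cheb_moment.simps(2) length_Cons, subst sum.lessThan_Suc_shift) (simp add: \<rho>0)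
  also have "(\<Sum>s<?L. \<rho> (w ! s - a) * nc_moment \<rho> (a # take s w) * cheb_moment \<rho> n a (drop (Suc s) w))
      = (\<Sum>s<?L. \<Sum>q<s. G q s)"
    unfolding G_def nc_moment_Cons
    by (intro sum.cong) (auto simp: min_def sum_distrib_left sum_distrib_right)
  also have "\<dots> = (\<Sum>q<?L. \<Sum>p<?L - Suc q. G q (Suc q + p))"
    by (rule sum_triangle_reindex)
  also have "\<dots> = cheb_moment \<rho> (Suc (Suc n)) a w"
  proof (subst cheb_moment.simps(2), rule sum.cong)
    fix q assume "q \<in> {..<?L}"
    have "G q (Suc q + p) = \<rho> (w ! q - a) * nc_moment \<rho> (take q w) *
        (\<rho> (drop (Suc q) w ! p - a) * nc_moment \<rho> (take p (drop (Suc q) w)) *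
         cheb_moment \<rho> n a (drop (Suc p) (drop (Suc q) w)))" if "p < ?L - Suc q" for p
      using that \<open>q \<in> {..<?L}\<close> unfolding G_def
      by (simp add: take_drop add.commute ac_simps)
    then show "(\<Sum>p<?L - Suc q. G q (Suc q + p)) =
        \<rho> (w ! q - a) * nc_moment \<rho> (take q w) * cheb_moment \<rho> (Suc n) a (drop (Suc q) w)"
      by (simp add: sum_distrib_left)
  qed simp
  finally show ?thesis by simp
qed

lemma cheb_moment_replicate:
  assumes \<rho>0: "\<rho> 0 = 1"
  shows "cheb_moment \<rho> n a (replicate j t) = \<rho> (t - a) ^ n * cheb_moment \<rho> n t (replicate j t)"
  by (induction n arbitrary: j) (simp_all add: \<rho>0 sum_distrib_left min_def ac_simps)

declare cheb_moment.simps(2) [simp del]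

text \<open>If \<open>U\<^sub>m(x) = \<Sum>\<^sub>j u\<^sub>m\<^sub>j x\<^sup>j\<close>, then \<open>cheb_functional m f = \<Sum>\<^sub>j u\<^sub>m\<^sub>j f j\<close>.\<close>

fun cheb_functional :: "nat \<Rightarrow> (nat \<Rightarrow> 'b::ab_group_add) \<Rightarrow> 'b" where
  "cheb_functional 0 f = f 0"
| "cheb_functional (Suc 0) f = f 1"
| "cheb_functional (Suc (Suc m)) f = cheb_functional (Suc m) (\<lambda>j. f (Suc j)) - cheb_functional m f"

lemma cheb_functional_add:
  "cheb_functional m (\<lambda>j. f j + g j) = cheb_functional m f + cheb_functional m g"
proof (induction m f arbitrary: g rule: cheb_functional.induct)
  case (3 m f)
  show ?case
    using "3.IH"(1)[of "\<lambda>j. g (Suc j)"] "3.IH"(2)[of g] by (simp add: algebra_simps)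
qed simp_all

lemma cheb_functional_mult: "cheb_functional m (\<lambda>j. (c::'b::ring) * f j) = c * cheb_functional m f"
  by (induction m f rule: cheb_functional.induct) (simp_all add: algebra_simps)

lemma cheb_functional_of_real:
  "cheb_functional m (\<lambda>j. of_real (f j) :: 'b::real_normed_algebra_1) = of_real (cheb_functional m f)"
  by (induction m f rule: cheb_functional.induct) simp_all

lemma cheb_functional_cheb_moment_replicate:
  assumes \<rho>0: "\<rho> 0 = 1"
  shows "cheb_functional m (\<lambda>j. cheb_moment \<rho> n t (replicate j t)) = (if n = m then 1 else 0)"
proof -
  define M where "M n = (\<lambda>j. cheb_moment \<rho> n t (replicate j t))" for n
  have M_0: "M n 0 = (if n = 0 then 1 else 0)" for n
    by (cases n) (simp_all add: M_def cheb_moment.simps(2))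
  have M_Suc: "(\<lambda>j. M n (Suc j)) = (if n = 0 then M 1 else (\<lambda>j. M (Suc n) j + M (n - 1) j))" for n
    by (cases n) (simp_all add: M_def cheb_moment_Suc_0 cheb_moment_Cons_same[of \<rho>, OF \<rho>0])
  have "cheb_functional m (M n) = (if n = m then 1 else 0)" for n
  proof (induction m arbitrary: n rule: less_induct)
    case (less m)
    consider "m = 0" | "m = 1" | m' where "m = Suc (Suc m')"
      by (metis One_nat_def not0_implies_Suc)
    then show ?case
    proof cases
      case 1
      then show ?thesis by (simp add: M_0)
    next
      case 2
      then show ?thesis using fun_cong[OF M_Suc[of n], of 0] by (simp add: M_0)
    next
      case 3
      have IH: "cheb_functional (Suc m') (M k) = (if k = Suc m' then 1 else 0)"
        "cheb_functional m' (M k) = (if k = m' then 1 else 0)" for k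
        using less.IH 3 by simp_all
      have "cheb_functional m (M n) = cheb_functional (Suc m') (\<lambda>j. M n (Suc j)) - (if n = m' then 1 else 0)"
        using 3 IH(2) by simp
      also have "\<dots> = (if n = m then 1 else 0)"
        using 3 by (cases n) (simp_all add: M_Suc cheb_functional_add IH(1))
      finally show ?thesis .
    qed
  qed
  then show ?thesis by (simp add: M_def)
qed

section \<open>Moments of Chebyshev polynomials of a semicircular sequence\<close>

lemma chebU_commute: "x * chebU n x = chebU n x * (x::'a::ring_1)"
proof (induction n x rule: chebU.induct)
  case (3 n x)
  then show ?case by (simp add: algebra_simps flip: mult.assoc)
qed simp_all

context
  fixes sc :: "complex \<Rightarrow> 'a::ring_1 \<Rightarrow> 'a" and st :: "'a \<Rightarrow> 'a" and \<phi> :: "'a \<Rightarrow> complex"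
  assumes star_prob: "star_prob_space sc st \<phi>"
begin

lemma state_add: "\<phi> (x + y) = \<phi> x + \<phi> y"
  using star_prob unfolding star_prob_space_def by blast

lemma state_scale: "\<phi> (sc a x) = a * \<phi> x"
  using star_prob unfolding star_prob_space_def by blast

lemma scale_mult_left: "sc a x * y = sc a (x * y)"
  using star_prob unfolding star_prob_space_def by metis

lemma scale_mult_right: "x * sc a y = sc a (x * y)"
  using star_prob unfolding star_prob_space_def by metis

lemma state_0: "\<phi> 0 = 0"
  using state_add[of 0 0] by simp

lemma state_diff: "\<phi> (x - y) = \<phi> x - \<phi> y"
  using state_add[of "x - y" y] by (simp add: eq_diff_eq)

lemma state_sum: "\<phi> (\<Sum>i\<in>A. f i) = (\<Sum>i\<in>A. \<phi> (f i))"
  by (induction A rule: infinite_finite_induct) (simp_all add: state_0 state_add)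

lemma state_mult_chebU: "\<phi> (y * chebU m x) = cheb_functional m (\<lambda>j. \<phi> (y * x ^ j))"
proof (induction m arbitrary: y rule: less_induct)
  case (less m)
  consider "m = 0" | "m = 1" | m' where "m = Suc (Suc m')"
    by (metis One_nat_def not0_implies_Suc)
  then show ?case
  proof cases
    case 3
    have "y * chebU m x = (y * x) * chebU (Suc m') x - y * chebU m' x"
      unfolding 3 by (simp add: algebra_simps)
    then have "\<phi> (y * chebU m x) =
        cheb_functional (Suc m') (\<lambda>j. \<phi> ((y * x) * x ^ j)) - cheb_functional m' (\<lambda>j. \<phi> (y * x ^ j))"
      using less 3 by (simp add: state_diff)
    then show ?thesis unfolding 3 by (simp add: mult.assoc)
  qed simp_all
qed

context
  fixes X :: "int \<Rightarrow> 'a" and \<rho> :: "int \<Rightarrow> real"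
  assumes semicircular: "stationary_std_semicircular sc st \<phi> X \<rho>"
begin

lemma covariance_0: "\<rho> 0 = 1"
  using semicircular unfolding stationary_std_semicircular_def by blast

lemma state_prod_list: "\<phi> (prod_list (map X w)) = of_real (nc_moment \<rho> w)"
  using semicircular unfolding stationary_std_semicircular_def nc_moment_def pairing_weight_def by blast

lemma state_chebU_mult_prod_list:
  "\<phi> (chebU n (X a) * prod_list (map X w)) = of_real (cheb_moment \<rho> n a w)"
proof (induction n arbitrary: w rule: less_induct)
  case (less n)
  consider "n = 0" | "n = 1" | n' where "n = Suc (Suc n')"
    by (metis One_nat_def not0_implies_Suc)
  then show ?case
  proof cases
    case 1
    then show ?thesis by (simp add: state_prod_list)
  next
    case 2
    then show ?thesis using state_prod_list[of "a # w"] by (simp add: cheb_moment_Suc_0)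
  next
    case 3
    have "chebU n (X a) * prod_list (map X w) =
        chebU (Suc n') (X a) * prod_list (map X (a # w)) - chebU n' (X a) * prod_list (map X w)"
      unfolding 3 by (simp add: chebU_commute left_diff_distrib mult.assoc)
    then show ?thesis
      using less.IH[of "Suc n'" "a # w"] less.IH[of n' w] 3
      by (simp add: state_diff cheb_moment_Cons_same[of \<rho>, OF covariance_0])
  qed
qed

lemma state_chebU_mult_chebU:
  "\<phi> (chebU n (X 0) * chebU m (X t)) = (if n = m then of_real (\<rho> t ^ n) else 0)"
proof -
  have "\<phi> (chebU n (X 0) * X t ^ j) = of_real (\<rho> t ^ n * cheb_moment \<rho> n t (replicate j t))" for j
    using state_chebU_mult_prod_list[of n 0 "replicate j t"]
      cheb_moment_replicate[where \<rho> = \<rho> and a = 0, OF covariance_0] by simp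
  then have "\<phi> (chebU n (X 0) * chebU m (X t)) =
      of_real (\<rho> t ^ n * cheb_functional m (\<lambda>j. cheb_moment \<rho> n t (replicate j t)))"
    by (simp add: state_mult_chebU cheb_functional_of_real cheb_functional_mult)
  then show ?thesis
    by (simp add: cheb_functional_cheb_moment_replicate[of \<rho>, OF covariance_0])
qed

lemma state_cheb_eval_mult_cheb_eval:
  assumes rank: "cheb_rank c K k"
  shows "\<phi> (cheb_eval sc c K (X 0) * cheb_eval sc c K (X t)) = of_real (\<Sum>j=k..K. (c j)\<^sup>2 * \<rho> t ^ j)"
proof -
  have "\<phi> (cheb_eval sc c K (X 0) * cheb_eval sc c K (X t)) =
      (\<Sum>n=1..K. \<Sum>m=1..K. of_real (c m) * (of_real (c n) * \<phi> (chebU n (X 0) * chebU m (X t))))"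
    unfolding cheb_eval_def sum_product by (simp add: scale_mult_left scale_mult_right state_sum state_scale)
  also have "\<dots> = (\<Sum>n=1..K. \<Sum>m=1..K. if m = n then of_real ((c n)\<^sup>2 * \<rho> t ^ n) else 0)"
    by (intro sum.cong refl) (simp add: state_chebU_mult_chebU power2_eq_square)
  also have "\<dots> = of_real (\<Sum>n=1..K. (c n)\<^sup>2 * \<rho> t ^ n)"
    by simp
  also have "(\<Sum>n=1..K. (c n)\<^sup>2 * \<rho> t ^ n) = (\<Sum>n=k..K. (c n)\<^sup>2 * \<rho> t ^ n)"
    using rank unfolding cheb_rank_def by (intro sum.mono_neutral_right) auto
  finally show ?thesis .
qed

end

end

section \<open>Summability\<close>

lemma tendsto_cofinite_int:
  fixes f :: "int \<Rightarrow> 'b::topological_space"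
  assumes "(f \<longlongrightarrow> l) at_top" and "(f \<longlongrightarrow> l) at_bot"
  shows "(f \<longlongrightarrow> l) cofinite"
proof (rule topological_tendstoI)
  fix S assume "open S" "l \<in> S"
  then obtain M N where top: "\<And>n. N \<le> n \<Longrightarrow> f n \<in> S" and bot: "\<And>n. n \<le> M \<Longrightarrow> f n \<in> S"
    using topological_tendstoD[OF assms(1)] topological_tendstoD[OF assms(2)]
    unfolding eventually_at_top_linorder eventually_at_bot_linorder by metis
  have "M \<le> n \<and> n \<le> N" if "f n \<notin> S" for n
    using top[of n] bot[of n] that by (cases "n \<le> M"; cases "N \<le> n") auto
  then have "{n. f n \<notin> S} \<subseteq> {M..N}"
    by auto
  then show "\<forall>\<^sub>F n in cofinite. f n \<in> S"
    unfolding eventually_cofinite using finite_subset by blast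
qed

lemma summable_on_comparison_cofinite:
  fixes f g :: "'b \<Rightarrow> real"
  assumes f: "f summable_on UNIV" and E: "finite E"
    and le: "\<And>n. n \<notin> E \<Longrightarrow> g n \<le> C * f n" and nonneg: "\<And>n. 0 \<le> g n"
  shows "g summable_on UNIV"
proof -
  have "(\<lambda>n. C * f n) summable_on (UNIV - E)"
    using summable_on_cofin_subset[OF f E] by (rule summable_on_cmult_right)
  then have "g summable_on (UNIV - E)"
    by (rule summable_on_comparison_test) (use le nonneg in auto)
  moreover have "g summable_on E"
    using E by simp
  ultimately have "g summable_on ((UNIV - E) \<union> E)"
    by (rule summable_on_union)
  then show ?thesis by simp
qed

lemma abs_sum_power_bounds:
  fixes a :: "nat \<Rightarrow> real"
  assumes "k \<le> K" and y: "\<bar>y\<bar> \<le> 1"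
  defines "H \<equiv> \<Sum>j=Suc k..K. \<bar>a j\<bar>"
  shows "\<bar>\<Sum>j=k..K. a j * y ^ j\<bar> \<le> (\<bar>a k\<bar> + H) * \<bar>y\<bar> ^ k"
    and "H * \<bar>y\<bar> \<le> \<bar>a k\<bar> / 2 \<Longrightarrow> \<bar>a k\<bar> / 2 * \<bar>y\<bar> ^ k \<le> \<bar>\<Sum>j=k..K. a j * y ^ j\<bar>"
proof -
  have split: "(\<Sum>j=k..K. a j * y ^ j) = a k * y ^ k + (\<Sum>j=Suc k..K. a j * y ^ j)"
    using \<open>k \<le> K\<close> by (simp add: sum.atLeast_Suc_atMost)
  have "\<bar>\<Sum>j=Suc k..K. a j * y ^ j\<bar> \<le> (\<Sum>j=Suc k..K. \<bar>a j\<bar> * \<bar>y\<bar> ^ Suc k)"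
  proof (rule order_trans[OF sum_abs sum_mono])
    fix j assume "j \<in> {Suc k..K}"
    then have "\<bar>y\<bar> ^ j \<le> \<bar>y\<bar> ^ Suc k" using y by (intro power_decreasing) auto
    then show "\<bar>a j * y ^ j\<bar> \<le> \<bar>a j\<bar> * \<bar>y\<bar> ^ Suc k"
      by (simp add: abs_mult power_abs mult_left_mono)
  qed
  also have "\<dots> = (H * \<bar>y\<bar>) * \<bar>y\<bar> ^ k"
    unfolding H_def sum_distrib_right power_Suc by (simp only: mult.assoc)
  finally have tail: "\<bar>\<Sum>j=Suc k..K. a j * y ^ j\<bar> \<le> (H * \<bar>y\<bar>) * \<bar>y\<bar> ^ k" .
  have "H * \<bar>y\<bar> \<le> H"
    using y unfolding H_def by (simp add: mult_left_le sum_nonneg)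
  then have "(H * \<bar>y\<bar>) * \<bar>y\<bar> ^ k \<le> H * \<bar>y\<bar> ^ k"
    by (simp add: mult_right_mono)
  then show "\<bar>\<Sum>j=k..K. a j * y ^ j\<bar> \<le> (\<bar>a k\<bar> + H) * \<bar>y\<bar> ^ k"
    using tail unfolding split by (simp add: abs_mult power_abs distrib_right abs_triangle_ineq [THEN order_trans])
  assume "H * \<bar>y\<bar> \<le> \<bar>a k\<bar> / 2"
  then have "(H * \<bar>y\<bar>) * \<bar>y\<bar> ^ k \<le> \<bar>a k\<bar> / 2 * \<bar>y\<bar> ^ k"
    by (rule mult_right_mono) simp
  then show "\<bar>a k\<bar> / 2 * \<bar>y\<bar> ^ k \<le> \<bar>\<Sum>j=k..K. a j * y ^ j\<bar>"
    using tail abs_triangle_ineq2[of "a k * y ^ k" "- (\<Sum>j=Suc k..K. a j * y ^ j)"]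
    unfolding split by (simp add: abs_mult power_abs)
qed

lemma summable_on_abs_sum_power_iff:
  fixes \<rho> :: "'b \<Rightarrow> real" and a :: "nat \<Rightarrow> real"
  assumes \<rho>: "(\<rho> \<longlongrightarrow> 0) cofinite" and "k \<le> K" and "a k \<noteq> 0"
  shows "(\<lambda>n. \<bar>\<Sum>j=k..K. a j * \<rho> n ^ j\<bar>) summable_on UNIV \<longleftrightarrow> (\<lambda>n. \<bar>\<rho> n\<bar> ^ k) summable_on UNIV"
proof -
  define H where "H = (\<Sum>j=Suc k..K. \<bar>a j\<bar>)"
  have "H \<ge> 0" unfolding H_def by (simp add: sum_nonneg)
  define \<delta> where "\<delta> = min 1 (\<bar>a k\<bar> / (2 * (H + 1)))"
  have "\<delta> > 0" unfolding \<delta>_def using \<open>a k \<noteq> 0\<close> \<open>H \<ge> 0\<close> by simp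
  define E where "E = {n. \<delta> \<le> \<bar>\<rho> n\<bar>}"
  have E: "finite E"
    using tendstoD[OF \<rho> \<open>\<delta> > 0\<close>] unfolding E_def eventually_cofinite by (simp add: not_less)
  have small: "\<bar>\<rho> n\<bar> \<le> 1" "H * \<bar>\<rho> n\<bar> \<le> \<bar>a k\<bar> / 2" if "n \<notin> E" for n
  proof -
    have \<rho>n: "\<bar>\<rho> n\<bar> \<le> \<delta>" using that unfolding E_def by simp
    then show "\<bar>\<rho> n\<bar> \<le> 1" unfolding \<delta>_def by simp
    have "H * \<bar>\<rho> n\<bar> \<le> H * (\<bar>a k\<bar> / (2 * (H + 1)))"
      using \<rho>n \<open>H \<ge> 0\<close> unfolding \<delta>_def by (intro mult_left_mono) auto
    also have "\<dots> = \<bar>a k\<bar> / 2 * (H / (H + 1))"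
      using \<open>H \<ge> 0\<close> by (simp add: field_simps)
    also have "\<dots> \<le> \<bar>a k\<bar> / 2"
      using \<open>H \<ge> 0\<close> by (intro mult_left_le) (auto simp: field_simps)
    finally show "H * \<bar>\<rho> n\<bar> \<le> \<bar>a k\<bar> / 2" .
  qed
  note bounds = abs_sum_power_bounds[OF \<open>k \<le> K\<close> small(1), of _ a, folded H_def]
  show ?thesis
  proof
    assume "(\<lambda>n. \<bar>\<Sum>j=k..K. a j * \<rho> n ^ j\<bar>) summable_on UNIV"
    then show "(\<lambda>n. \<bar>\<rho> n\<bar> ^ k) summable_on UNIV"
    proof (rule summable_on_comparison_cofinite[OF _ E])
      fix n assume "n \<notin> E"
      then show "\<bar>\<rho> n\<bar> ^ k \<le> 2 / \<bar>a k\<bar> * \<bar>\<Sum>j=k..K. a j * \<rho> n ^ j\<bar>"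
        using bounds(2)[of n] small(2)[of n] \<open>a k \<noteq> 0\<close> by (simp add: field_simps)
    qed simp
  next
    assume "(\<lambda>n. \<bar>\<rho> n\<bar> ^ k) summable_on UNIV"
    then show "(\<lambda>n. \<bar>\<Sum>j=k..K. a j * \<rho> n ^ j\<bar>) summable_on UNIV"
      by (rule summable_on_comparison_cofinite[OF _ E]) (use bounds(1) in auto)
  qed
qed

theorem lemma4p3:
  fixes sc :: "complex \<Rightarrow> 'a::ring_1 \<Rightarrow> 'a" and st :: "'a \<Rightarrow> 'a" and \<phi> :: "'a \<Rightarrow> complex"
    and X :: "int \<Rightarrow> 'a" and \<rho> :: "int \<Rightarrow> real"
    and c :: "nat \<Rightarrow> real" and K k :: nat
  assumes "star_prob_space sc st \<phi>"
    and "stationary_std_semicircular sc st \<phi> X \<rho>"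
    and "(\<rho> \<longlongrightarrow> 0) at_top" and "(\<rho> \<longlongrightarrow> 0) at_bot"
    and "c 0 = 0"
    and "cheb_rank c K k"
  shows "(\<forall>t::int. \<phi> (cheb_eval sc c K (X 0) * cheb_eval sc c K (X t)) =
            complex_of_real (\<Sum>j=k..K. (c j)\<^sup>2 * (\<rho> t) ^ j))
       \<and> ((\<lambda>n::int. norm (\<phi> (cheb_eval sc c K (X 0) * cheb_eval sc c K (X n)))) summable_on UNIV
            \<longleftrightarrow> (\<lambda>n::int. \<bar>\<rho> n\<bar> ^ k) summable_on UNIV)"
proof -
  have covariance: "\<phi> (cheb_eval sc c K (X 0) * cheb_eval sc c K (X t)) =
      complex_of_real (\<Sum>j=k..K. (c j)\<^sup>2 * \<rho> t ^ j)" for t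
    using state_cheb_eval_mult_cheb_eval[OF assms(1,2,6)] .
  have "k \<le> K" "(c k)\<^sup>2 \<noteq> 0"
    using assms(6) unfolding cheb_rank_def by simp_all
  then have "(\<lambda>n. \<bar>\<Sum>j=k..K. (c j)\<^sup>2 * \<rho> n ^ j\<bar>) summable_on UNIV \<longleftrightarrow> (\<lambda>n. \<bar>\<rho> n\<bar> ^ k) summable_on UNIV"
    by (intro summable_on_abs_sum_power_iff tendsto_cofinite_int assms(3,4))
  then show ?thesis
    using covariance by (simp only: norm_of_real) simp
qed

end
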